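(* Fix $t>1$. For $n=1,2,\ldots$ let $a_n=1^{t^n}\cdot2^{t^{n-1}}\cdot3^{t^{n-2}}\cdots n^{t^1}$. Then $$\lim_{n\to\infty}a_n^{1/t^n}=\sigma_t^{\,t}<\infty,$$ where $\sigma_t=\prod_{n=1}^\infty n^{1/t^n}$. Moreover, with $$b_n=\sqrt[t]{a_1+\sqrt[t]{a_2+\cdots+\sqrt[t]{a_{n-1}+\sqrt[t]{a_n}}}},\qquad B_n=\sqrt[t]{1+2\sqrt[t]{1+3\sqrt[t]{1+\cdots+(n-1)\sqrt[t]{1+n\sqrt[t]{1}}}}},$$ both sequences $(b_n)_{n\ge1}$ and $(B_n)_{n\ge1}$ converge, and $\lim_{n\to\infty}b_n=\lim_{n\to\infty}B_n$.
   Context: For $a\ge0$ and $t>0$, $\sqrt[t]{a}=a^{1/t}\ge0$ denotes the nonnegative root. *)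

theory Defs
  imports "HOL-Analysis.Analysis"
begin

definition seq_a :: "real \<Rightarrow> nat \<Rightarrow> real" where
  "seq_a t n = (\<Prod>k=1..n. real k powr (t ^ (n + 1 - k)))"

text \<open>nest_b t f i m = root_t(f i + root_t(f (i+1) + ... + root_t(f (i+m-1)))) (m radicals);
  so b_n = nest_b t (seq_a t) 1 n.\<close>
fun nest_b :: "real \<Rightarrow> (nat \<Rightarrow> real) \<Rightarrow> nat \<Rightarrow> nat \<Rightarrow> real" where
  "nest_b t f i 0 = 0"
| "nest_b t f i (Suc m) = (f i + nest_b t f (Suc i) m) powr (1 / t)"

text \<open>nest_B t i m = root_t(1 + (i+1) root_t(1 + ... + (i+m) root_t(1)));
  so B_n = nest_B t 1 (n-1).\<close>
fun nest_B :: "real \<Rightarrow> nat \<Rightarrow> nat \<Rightarrow> real" where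
  "nest_B t i 0 = 1 powr (1 / t)"
| "nest_B t i (Suc m) = (1 + real (Suc i) * nest_B t (Suc i) m) powr (1 / t)"

end

theory Submission
  imports Defs
begin

text \<open>Since a(n+1) = (a(n) (n+1))^t, the normalised root a(n)^(1/t^n) is the t-th power of
  the partial product of the factors k^(1/t^k), which converges because the sum of ln k / t^k does.
  The same recursion gives a(k+1)^(1/t) = a(k) (k+1); pulling a(k) out of each radical of b(n)
  turns it into B(n) term by term (a(1) = 1), so the two limits coincide once one exists.
  The B(n) increase, and they are bounded: a(k) \<le> D^(t^k) with D = sigma_t^t, and a nested
  radical whose k-th term is at most D^(t^k) stays below L D whenever 1 + L \<le> L^t.\<close>

definition sigma_factor :: "real \<Rightarrow> nat \<Rightarrow> real" where
  "sigma_factor t n = real (Suc n) powr (1 / t ^ Suc n)"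

lemma sigma_factor_ge_1: "t > 0 \<Longrightarrow> sigma_factor t n \<ge> 1"
  unfolding sigma_factor_def by (simp add: ge_one_powr_ge_zero)

lemma summable_ln_Suc_div_power:
  fixes t :: real
  assumes "t > 1"
  shows "summable (\<lambda>n. ln (real (Suc n)) / t ^ Suc n)"
proof (rule summable_comparison_test)
  show "summable (\<lambda>n. real (Suc n) * (1/t) ^ n)"
    using geometric_deriv_sums[of "1/t"] assms by (auto simp: sums_iff)
  show "\<exists>N. \<forall>n\<ge>N. norm (ln (real (Suc n)) / t ^ Suc n) \<le> real (Suc n) * (1/t) ^ n"
  proof (intro exI allI impI)
    fix n :: nat
    have "ln (real (Suc n)) \<le> real (Suc n)"
      by (rule ln_le_minus_one[THEN order_trans]) auto
    moreover have "t ^ n \<le> t ^ Suc n"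
      using assms by simp
    ultimately have "ln (real (Suc n)) / t ^ Suc n \<le> real (Suc n) / t ^ n"
      using assms by (intro frac_le) auto
    then show "norm (ln (real (Suc n)) / t ^ Suc n) \<le> real (Suc n) * (1/t) ^ n"
      using assms by (simp add: power_divide)
  qed
qed

lemma convergent_prod_sigma_factor: "t > 1 \<Longrightarrow> convergent_prod (sigma_factor t)"
proof -
  have "sigma_factor t = (\<lambda>n. exp (ln (real (Suc n)) / t ^ Suc n))"
    by (simp add: sigma_factor_def powr_def fun_eq_iff)
  then show "t > 1 \<Longrightarrow> convergent_prod (sigma_factor t)"
    using convergent_prod_exp[OF summable_ln_Suc_div_power] by simp
qed

lemma sigma_factor_has_prod:
  "t > 1 \<Longrightarrow> sigma_factor t has_prod (\<Prod>n. sigma_factor t n)"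
  using convergent_prod_has_prod convergent_prod_sigma_factor by blast

lemma prodinf_sigma_factor_ge_1: "t > 1 \<Longrightarrow> (\<Prod>n. sigma_factor t n) \<ge> 1"
  by (rule prodinf_nonneg[OF sigma_factor_has_prod sigma_factor_ge_1]) auto

lemma partial_prod_sigma_factor_bounds:
  assumes "t > 1"
  shows "0 \<le> (\<Prod>j<n. sigma_factor t j)" "(\<Prod>j<n. sigma_factor t j) \<le> (\<Prod>n. sigma_factor t n)"
proof -
  have ge0: "0 \<le> sigma_factor t j" for j
    using sigma_factor_ge_1[of t j] assms by simp
  show "0 \<le> (\<Prod>j<n. sigma_factor t j)"
    by (simp add: ge0 prod_nonneg)
  show "(\<Prod>j<n. sigma_factor t j) \<le> (\<Prod>n. sigma_factor t n)"
    using assms by (intro prod_le_prodinf[OF sigma_factor_has_prod]) (auto simp: ge0 sigma_factor_ge_1)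
qed

lemma partial_prod_sigma_factor_tendsto:
  assumes "t > 1"
  shows "(\<lambda>n. \<Prod>j<n. sigma_factor t j) \<longlonglongrightarrow> (\<Prod>n. sigma_factor t n)"
proof -
  have "(\<lambda>n. \<Prod>j<Suc n. sigma_factor t j) \<longlonglongrightarrow> (\<Prod>n. sigma_factor t n)"
    unfolding lessThan_Suc_atMost
    by (rule convergent_prod_LIMSEQ[OF convergent_prod_sigma_factor[OF assms]])
  then show ?thesis
    by (rule LIMSEQ_imp_Suc)
qed

lemma seq_a_nonneg: "seq_a t k \<ge> 0"
  unfolding seq_a_def by (rule prod_nonneg) auto

lemma seq_a_Suc: "seq_a t (Suc k) = (seq_a t k * real (Suc k)) powr t"
proof -
  have "seq_a t (Suc k) = (\<Prod>j=1..k. real j powr (t ^ (Suc k + 1 - j))) * real (Suc k) powr t"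
    unfolding seq_a_def by (simp add: prod.cl_ivl_Suc)
  also have "(\<Prod>j=1..k. real j powr (t ^ (Suc k + 1 - j))) =
      (\<Prod>j=1..k. (real j powr (t ^ (k + 1 - j))) powr t)"
  proof (rule prod.cong)
    fix j assume "j \<in> {1..k}"
    then have "Suc k + 1 - j = Suc (k + 1 - j)" by auto
    then show "real j powr (t ^ (Suc k + 1 - j)) = (real j powr (t ^ (k + 1 - j))) powr t"
      by (simp add: powr_powr mult.commute)
  qed simp
  also have "\<dots> = seq_a t k powr t"
    unfolding seq_a_def by (simp add: prod_powr_distrib)
  finally show ?thesis by (simp add: powr_mult seq_a_nonneg)
qed

lemma seq_a_Suc_root: "t > 0 \<Longrightarrow> seq_a t (Suc k) powr (1/t) = seq_a t k * real (Suc k)"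
  by (simp add: seq_a_Suc powr_powr seq_a_nonneg)

lemma seq_a_root_eq_partial_prod:
  assumes "t > 0"
  shows "seq_a t n powr (1 / t ^ n) = (\<Prod>j<n. sigma_factor t j) powr t"
proof (induction n)
  case 0
  then show ?case by (simp add: seq_a_def)
next
  case (Suc n)
  let ?P = "\<Prod>j<n. sigma_factor t j"
  have "seq_a t (Suc n) powr (1 / t ^ Suc n) = (seq_a t n * real (Suc n)) powr (1 / t ^ n)"
    using assms by (simp add: seq_a_Suc powr_powr)
  also have "\<dots> = seq_a t n powr (1 / t ^ n) * real (Suc n) powr (1 / t ^ n)"
    by (simp add: powr_mult seq_a_nonneg)
  also have "real (Suc n) powr (1 / t ^ n) = sigma_factor t n powr t"
    unfolding sigma_factor_def using assms by (simp add: powr_powr)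
  also have "seq_a t n powr (1 / t ^ n) * sigma_factor t n powr t = (?P * sigma_factor t n) powr t"
    using Suc assms sigma_factor_ge_1[of t] by (simp add: powr_mult prod_nonneg)
  finally show ?case by simp
qed

lemma seq_a_root_tendsto:
  "t > 1 \<Longrightarrow> (\<lambda>n. seq_a t n powr (1 / t ^ n)) \<longlonglongrightarrow> (\<Prod>n. sigma_factor t n) powr t"
  using prodinf_sigma_factor_ge_1[of t]
  by (simp add: seq_a_root_eq_partial_prod)
    (intro tendsto_powr partial_prod_sigma_factor_tendsto tendsto_const, auto)

lemma seq_a_le_power:
  assumes "t > 1"
  shows "seq_a t k \<le> ((\<Prod>n. sigma_factor t n) powr t) powr (t ^ k)"
proof -
  have "seq_a t k = (seq_a t k powr (1 / t ^ k)) powr (t ^ k)"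
    using assms by (simp add: powr_powr seq_a_nonneg)
  also have "\<dots> = ((\<Prod>j<k. sigma_factor t j) powr t) powr (t ^ k)"
    using assms by (simp add: seq_a_root_eq_partial_prod)
  also have "\<dots> \<le> ((\<Prod>n. sigma_factor t n) powr t) powr (t ^ k)"
    using assms partial_prod_sigma_factor_bounds[OF assms, of k] by (intro powr_mono2) auto
  finally show ?thesis .
qed

lemma nest_B_nonneg: "nest_B t i m \<ge> 0"
  by (cases m) auto

lemma nest_b_nonneg: "nest_b t f i m \<ge> 0"
  by (cases m) auto

lemma nest_b_seq_a_eq_nest_B:
  "t > 0 \<Longrightarrow> nest_b t (seq_a t) k (Suc m) = seq_a t k powr (1/t) * nest_B t k m"
proof (induction m arbitrary: k)
  case 0
  then show ?case by simp
next
  case (Suc m)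
  have "nest_b t (seq_a t) k (Suc (Suc m)) =
      (seq_a t k + seq_a t (Suc k) powr (1/t) * nest_B t (Suc k) m) powr (1/t)"
    using Suc by simp
  also have "\<dots> = (seq_a t k * (1 + real (Suc k) * nest_B t (Suc k) m)) powr (1/t)"
    using Suc.prems by (simp add: seq_a_Suc_root algebra_simps)
  also have "\<dots> = seq_a t k powr (1/t) * nest_B t k (Suc m)"
    by (simp add: powr_mult seq_a_nonneg nest_B_nonneg)
  finally show ?case .
qed

lemma nest_b_seq_a_eq_nest_B_1: "t > 0 \<Longrightarrow> nest_b t (seq_a t) 1 (Suc n) = nest_B t 1 n"
  using nest_b_seq_a_eq_nest_B[of t 1 n] by (simp add: seq_a_def)

lemma nest_B_le_Suc: "t > 0 \<Longrightarrow> nest_B t i m \<le> nest_B t i (Suc m)"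
proof (induction m arbitrary: i)
  case 0
  then show ?case by (simp add: ge_one_powr_ge_zero)
next
  case (Suc m)
  have "nest_B t (Suc i) m \<le> nest_B t (Suc i) (Suc m)"
    using Suc by blast
  then show ?case
    unfolding nest_B.simps(2)[of t i] using Suc.prems
    by (intro powr_mono2) (auto intro!: mult_left_mono add_nonneg_nonneg simp: nest_B_nonneg)
qed

lemma nest_b_bound:
  assumes t: "t > 1" and L: "L \<ge> 0" "1 + L \<le> L powr t" and D: "D > 0"
    and f: "\<And>k. 0 \<le> f k" "\<And>k. f k \<le> D powr (t ^ k)"
  shows "nest_b t f i m \<le> L * D powr (t ^ i / t)"
proof (induction m arbitrary: i)
  case 0
  then show ?case using L D by simp
next
  case (Suc m)
  have "nest_b t f i (Suc m) = (f i + nest_b t f (Suc i) m) powr (1/t)"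
    by simp
  also have "\<dots> \<le> (D powr (t ^ i) + L * D powr (t ^ i)) powr (1/t)"
    using Suc[of "Suc i"] f[of i] t
    by (intro powr_mono2) (auto intro!: add_nonneg_nonneg nest_b_nonneg f)
  also have "\<dots> = (D powr (t ^ i) * (1 + L)) powr (1/t)"
    by (simp add: algebra_simps)
  also have "\<dots> \<le> (D powr (t ^ i) * L powr t) powr (1/t)"
    using t L by (intro powr_mono2 mult_left_mono) auto
  also have "\<dots> = L * D powr (t ^ i / t)"
    using t L by (simp add: powr_mult powr_powr)
  finally show ?case .
qed

lemma exists_Suc_le_powr:
  fixes t :: real
  assumes "t > 1"
  obtains L where "L \<ge> 0" "1 + L \<le> L powr t"
proof
  define L where "L = (2::real) powr (1 / (t - 1))"
  have L1: "L \<ge> 1"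
    unfolding L_def using assms by (simp add: ge_one_powr_ge_zero)
  have "L powr t = L * L powr (t - 1)"
    using L1 powr_add[of L 1 "t - 1"] by simp
  also have "L powr (t - 1) = 2"
    unfolding L_def using assms by (simp add: powr_powr)
  finally show "1 + L \<le> L powr t"
    using L1 by simp
  show "L \<ge> 0"
    using L1 by simp
qed

lemma nest_B_bounded:
  assumes "t > 1"
  shows "\<exists>M. \<forall>n. nest_B t 1 n \<le> M"
proof -
  obtain L where L: "L \<ge> 0" "1 + L \<le> L powr t"
    using exists_Suc_le_powr[OF assms] .
  define D where "D = (\<Prod>n. sigma_factor t n) powr t"
  have D: "D > 0"
    unfolding D_def using prodinf_sigma_factor_ge_1[OF assms] by simp
  have "nest_B t 1 n \<le> L * D" for n
    using nest_b_bound[OF assms L D seq_a_nonneg seq_a_le_power[OF assms, folded D_def], of 1 "Suc n"]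
      nest_b_seq_a_eq_nest_B_1[of t n] assms D
    by simp
  then show ?thesis
    by blast
qed

lemma convergent_nest_B: "t > 1 \<Longrightarrow> convergent (\<lambda>n. nest_B t 1 n)"
  using nest_B_bounded[of t] incseq_SucI[of "\<lambda>n. nest_B t 1 n"] nest_B_le_Suc[of t 1]
    incseq_convergent[of "\<lambda>n. nest_B t 1 n"]
  by (fastforce simp: convergent_def)

theorem corollary25:
  fixes t :: real
  assumes "t > 1"
  shows "convergent_prod (\<lambda>n. real (Suc n) powr (1 / t ^ Suc n))
    \<and> (\<lambda>n. seq_a t n powr (1 / t ^ n))
        \<longlonglongrightarrow> (\<Prod>n. real (Suc n) powr (1 / t ^ Suc n)) powr t
    \<and> convergent (\<lambda>n. nest_b t (seq_a t) 1 (Suc n))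
    \<and> convergent (\<lambda>n. nest_B t 1 n)
    \<and> lim (\<lambda>n. nest_b t (seq_a t) 1 (Suc n)) = lim (\<lambda>n. nest_B t 1 n)"
proof -
  have "nest_b t (seq_a t) 1 (Suc n) = nest_B t 1 n" for n
    using nest_b_seq_a_eq_nest_B_1[of t n] assms by simp
  then show ?thesis
    using convergent_prod_sigma_factor[OF assms] seq_a_root_tendsto[OF assms]
      convergent_nest_B[OF assms]
    unfolding sigma_factor_def[abs_def] by simp
qed

end
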